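(* Let $n$ be an integer and $r>0$. Then the function $F(\eta)=\eta^{2}\frac{I_n'(\eta^{-1}r)}{I_n(\eta^{-1}r)}$ is strictly monotonically increasing in $\eta\in(0,\infty)$.
   Context: $I_n$ denotes the modified Bessel function of the first kind of order $n$ (with $I_{-n}=I_n$ for integer $n$). *)

theory Defs
  imports "HOL-Analysis.Analysis"
begin

text \<open>Modified Bessel function of the first kind of integer order n (real argument),
  given by its power series; for negative integer order we use I_{-n} = I_n.\<close>
definition besselI :: "int \<Rightarrow> real \<Rightarrow> real" where
  "besselI n x = (\<Sum>k. (x / 2) ^ (2 * k + nat \<bar>n\<bar>) / (fact k * fact (k + nat \<bar>n\<bar>)))"

end

theory Submission
  imports Defs
begin

text \<open>With \<open>m = |n|\<close> we have \<open>I\<^sub>n(x) = (x/2)\<^sup>m B\<^sub>m(x\<^sup>2/4)\<close>, where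
  \<open>B\<^sub>m(t) = \<Sum>\<^sub>k t\<^sup>k / (k! (k+m)!)\<close> satisfies \<open>B\<^sub>m' = B\<^sub>m\<^sub>+\<^sub>1\<close>. Hence
  \<open>F(\<eta>) = m \<eta>\<^sup>3 / r + (r \<eta> / 2) \<cdot> B\<^sub>m\<^sub>+\<^sub>1(T) / B\<^sub>m(T)\<close> with \<open>T = r\<^sup>2 / (4 \<eta>\<^sup>2)\<close>.
  The coefficients of \<open>B\<^sub>m\<^sub>+\<^sub>1\<close> and \<open>B\<^sub>m\<close> have the decreasing ratio \<open>1/(k+m+1)\<close>, and
  a symmetrisation of the Cauchy product (a Chebyshev-type sum inequality) shows that
  then \<open>B\<^sub>m\<^sub>+\<^sub>1/B\<^sub>m\<close> is nonincreasing in \<open>T\<close>, i.e. nondecreasing in \<open>\<eta>\<close>. Since it is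
  positive, the factor \<open>\<eta>\<close> makes \<open>F\<close> strictly increasing.\<close>

lemma power_cross_le:
  fixes t t' :: real
  assumes "i \<le> j" "0 \<le> t" "t \<le> t'"
  shows "t ^ j * t' ^ i \<le> t ^ i * t' ^ j"
proof -
  have "t ^ i * t' ^ i * t ^ (j - i) \<le> t ^ i * t' ^ i * t' ^ (j - i)"
    using assms by (intro mult_left_mono power_mono) auto
  moreover have "t ^ j = t ^ i * t ^ (j - i)" "t' ^ j = t' ^ i * t' ^ (j - i)"
    using assms(1) by (simp_all flip: power_add)
  ultimately show ?thesis by (simp add: algebra_simps)
qed

lemma sum_power_product_cross_le:
  fixes a b :: "nat \<Rightarrow> real" and t t' :: real
  assumes ratio_mono: "\<And>i j. i \<le> j \<Longrightarrow> a j * b i \<le> a i * b j"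
    and "0 \<le> t" "t \<le> t'"
  shows "(\<Sum>i<N. a i * t' ^ i) * (\<Sum>j<N. b j * t ^ j)
       \<le> (\<Sum>i<N. a i * t ^ i) * (\<Sum>j<N. b j * t' ^ j)"
proof -
  define D where "D i j = a i * b j * (t ^ i * t' ^ j - t' ^ i * t ^ j)" for i j
  define S where "S = (\<Sum>i<N. \<Sum>j<N. D i j)"
  have diff_eq: "(\<Sum>i<N. a i * t ^ i) * (\<Sum>j<N. b j * t' ^ j)
       - (\<Sum>i<N. a i * t' ^ i) * (\<Sum>j<N. b j * t ^ j) = S"
    unfolding S_def D_def sum_product sum_subtractf[symmetric]
    by (intro sum.cong refl) (simp add: algebra_simps)
  have D_sym_nonneg: "0 \<le> D i j + D j i" for i j
  proof -
    have D_sym: "D i j + D j i = (a i * b j - a j * b i) * (t ^ i * t' ^ j - t ^ j * t' ^ i)"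
      unfolding D_def by (simp add: algebra_simps)
    show ?thesis
    proof (cases "i \<le> j")
      case True
      then show ?thesis unfolding D_sym
        using ratio_mono[OF True] power_cross_le[OF True assms(2,3)] by simp
    next
      case False
      then have "j \<le> i" by simp
      show ?thesis unfolding D_sym
        by (rule mult_nonpos_nonpos)
           (use ratio_mono[OF \<open>j \<le> i\<close>] power_cross_le[OF \<open>j \<le> i\<close> assms(2,3)] in simp_all)
    qed
  qed
  have "2 * S = (\<Sum>i<N. \<Sum>j<N. D i j + D j i)"
    unfolding mult_2 by (subst (2) S_def, subst sum.swap) (simp add: S_def sum.distrib)
  also have "\<dots> \<ge> 0" by (intro sum_nonneg D_sym_nonneg)
  finally show ?thesis using diff_eq by linarith
qed

lemma suminf_power_product_cross_le:
  fixes a b :: "nat \<Rightarrow> real" and t t' :: real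
  assumes "\<And>i j. i \<le> j \<Longrightarrow> a j * b i \<le> a i * b j"
    and "0 \<le> t" "t \<le> t'"
    and "summable (\<lambda>i. a i * t ^ i)" "summable (\<lambda>i. a i * t' ^ i)"
    and "summable (\<lambda>j. b j * t ^ j)" "summable (\<lambda>j. b j * t' ^ j)"
  shows "(\<Sum>i. a i * t' ^ i) * (\<Sum>j. b j * t ^ j) \<le> (\<Sum>i. a i * t ^ i) * (\<Sum>j. b j * t' ^ j)"
  by (rule LIMSEQ_le[OF tendsto_mult[OF summable_LIMSEQ summable_LIMSEQ]
                        tendsto_mult[OF summable_LIMSEQ summable_LIMSEQ]])
     (use assms sum_power_product_cross_le[OF assms(1-3)] in auto)

definition bessel_coeff :: "nat \<Rightarrow> nat \<Rightarrow> real" where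
  "bessel_coeff m k = 1 / (fact k * fact (k + m))"

definition bessel_series :: "nat \<Rightarrow> real \<Rightarrow> real" where
  "bessel_series m t = (\<Sum>k. bessel_coeff m k * t ^ k)"

lemma bessel_coeff_pos: "0 < bessel_coeff m k"
  by (simp add: bessel_coeff_def)

lemma bessel_coeff_le_inverse_fact: "bessel_coeff m k \<le> inverse (fact k)"
proof -
  have "fact k * 1 \<le> fact k * (fact (k + m) :: real)"
    by (intro mult_left_mono) auto
  then show ?thesis unfolding bessel_coeff_def by (simp add: divide_simps)
qed

lemma bessel_coeff_Suc: "bessel_coeff (Suc m) k = bessel_coeff m k / (real k + real m + 1)"
  unfolding bessel_coeff_def
  by (simp add: fact_Suc[of "k + m", simplified] divide_simps algebra_simps)

lemma summable_bessel_series: "summable (\<lambda>k. bessel_coeff m k * t ^ k)"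
proof (rule summable_comparison_test[OF _ summable_exp[of "\<bar>t\<bar>"]])
  show "\<exists>N. \<forall>k\<ge>N. norm (bessel_coeff m k * t ^ k) \<le> inverse (fact k) * \<bar>t\<bar> ^ k"
    using bessel_coeff_pos[of m] bessel_coeff_le_inverse_fact[of m]
    by (auto simp: abs_mult power_abs less_imp_le intro!: mult_right_mono)
qed

lemma diffs_bessel_coeff: "diffs (bessel_coeff m) = bessel_coeff (Suc m)"
proof
  fix k
  have "fact (Suc k + m) = (fact (k + Suc m) :: real)" by simp
  then show "diffs (bessel_coeff m) k = bessel_coeff (Suc m) k"
    unfolding diffs_def bessel_coeff_def
    by (simp add: fact_Suc divide_simps del: of_nat_Suc)
qed

lemma has_field_derivative_bessel_series:
  "(bessel_series m has_field_derivative bessel_series (Suc m) t) (at t)"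
  using termdiffs_strong[OF summable_bessel_series[of m "\<bar>t\<bar> + 1"], of t]
  unfolding diffs_bessel_coeff bessel_series_def[abs_def] by simp

lemma bessel_series_pos: "0 < t \<Longrightarrow> 0 < bessel_series m t"
  unfolding bessel_series_def
  by (rule suminf_pos[OF summable_bessel_series]) (simp add: bessel_coeff_pos)

lemma bessel_series_ratio_antimono:
  assumes "0 < t" "t \<le> t'"
  shows "bessel_series (Suc m) t' / bessel_series m t' \<le> bessel_series (Suc m) t / bessel_series m t"
proof -
  have "bessel_coeff (Suc m) j * bessel_coeff m i \<le> bessel_coeff (Suc m) i * bessel_coeff m j"
    if "i \<le> j" for i j
  proof -
    have "bessel_coeff m i * bessel_coeff m j / (real j + real m + 1)
        \<le> bessel_coeff m i * bessel_coeff m j / (real i + real m + 1)"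
      using that bessel_coeff_pos[of m, THEN less_imp_le]
      by (intro divide_left_mono mult_nonneg_nonneg) auto
    then show ?thesis unfolding bessel_coeff_Suc by (simp add: algebra_simps)
  qed
  then have "bessel_series (Suc m) t' * bessel_series m t \<le> bessel_series (Suc m) t * bessel_series m t'"
    unfolding bessel_series_def
    using assms by (intro suminf_power_product_cross_le summable_bessel_series) auto
  then show ?thesis
    using bessel_series_pos[of t m] bessel_series_pos[of t' m] assms by (simp add: divide_simps)
qed

lemma besselI_eq_bessel_series:
  "besselI n x = (x / 2) ^ nat \<bar>n\<bar> * bessel_series (nat \<bar>n\<bar>) (x\<^sup>2 / 4)"
proof -
  define m where "m = nat \<bar>n\<bar>"
  have power_eq: "(x / 2) ^ (2 * k + m) = (x / 2) ^ m * (x\<^sup>2 / 4) ^ k" for k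
  proof -
    have "(x / 2) ^ (2 * k + m) = (x / 2) ^ m * ((x / 2)\<^sup>2) ^ k"
      by (simp add: power_add power_mult)
    also have "(x / 2)\<^sup>2 = x\<^sup>2 / 4" by (simp add: power_divide)
    finally show ?thesis .
  qed
  have term_eq: "(x / 2) ^ (2 * k + m) / (fact k * fact (k + m))
      = (x / 2) ^ m * (bessel_coeff m k * (x\<^sup>2 / 4) ^ k)" for k
    unfolding power_eq bessel_coeff_def by simp
  have "besselI n x = (\<Sum>k. (x / 2) ^ m * (bessel_coeff m k * (x\<^sup>2 / 4) ^ k))"
    unfolding besselI_def m_def[symmetric] term_eq ..
  also have "\<dots> = (x / 2) ^ m * bessel_series m (x\<^sup>2 / 4)"
    unfolding bessel_series_def by (rule suminf_mult[OF summable_bessel_series])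
  finally show ?thesis unfolding m_def .
qed

lemma besselI_logarithmic_derivative:
  fixes n :: int
  assumes "x > 0"
  defines "m \<equiv> nat \<bar>n\<bar>"
  shows "deriv (besselI n) x / besselI n x
       = real m / x + x / 2 * (bessel_series (Suc m) (x\<^sup>2 / 4) / bessel_series m (x\<^sup>2 / 4))"
proof -
  have "((\<lambda>x. (x / 2) ^ m * bessel_series m (x\<^sup>2 / 4)) has_real_derivative
      real m * (x / 2) ^ (m - 1) * (1 / 2) * bessel_series m (x\<^sup>2 / 4)
      + (x / 2) ^ m * (bessel_series (Suc m) (x\<^sup>2 / 4) * (2 * x / 4))) (at x)"
    by (rule derivative_eq_intros DERIV_chain2[OF has_field_derivative_bessel_series] refl | simp)+
  moreover have "besselI n = (\<lambda>x. (x / 2) ^ m * bessel_series m (x\<^sup>2 / 4))"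
    unfolding m_def using besselI_eq_bessel_series by blast
  ultimately have deriv_eq: "deriv (besselI n) x
      = real m * (x / 2) ^ (m - 1) * (1 / 2) * bessel_series m (x\<^sup>2 / 4)
        + (x / 2) ^ m * (bessel_series (Suc m) (x\<^sup>2 / 4) * (2 * x / 4))"
    by (simp add: DERIV_imp_deriv)
  have "real m * (x / 2) ^ (m - 1) * (1 / 2) = real m / x * (x / 2) ^ m"
    using assms(1) by (cases m) (simp_all add: field_simps)
  moreover have "bessel_series m (x\<^sup>2 / 4) > 0"
    using assms(1) by (simp add: bessel_series_pos)
  ultimately show ?thesis
    unfolding deriv_eq besselI_eq_bessel_series m_def[symmetric]
    using assms(1) by (simp add: field_simps)
qed

theorem corollary2p1:
  fixes n :: int and r :: real
  assumes "r > 0"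
  shows "strict_mono_on {0<..}
           (\<lambda>\<eta>::real. \<eta>\<^sup>2 * (deriv (besselI n) (r / \<eta>) / besselI n (r / \<eta>)))"
proof (rule strict_mono_onI)
  define m where "m = nat \<bar>n\<bar>"
  define T where "T \<eta> = (r / \<eta>)\<^sup>2 / 4" for \<eta> :: real
  define R where "R \<eta> = bessel_series (Suc m) (T \<eta>) / bessel_series m (T \<eta>)" for \<eta>
  have F_eq: "\<eta>\<^sup>2 * (deriv (besselI n) (r / \<eta>) / besselI n (r / \<eta>))
       = real m * \<eta> ^ 3 / r + r / 2 * (\<eta> * R \<eta>)" if "\<eta> > 0" for \<eta>
    unfolding besselI_logarithmic_derivative[OF divide_pos_pos[OF assms that]] m_def[symmetric]
      R_def T_def
    using that assms by (simp add: field_simps power2_eq_square power3_eq_cube)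
  fix a b :: real
  assume "a \<in> {0<..}" "b \<in> {0<..}" "a < b"
  then have a: "0 < a" and b: "0 < b" and "a < b" by simp_all
  have "0 < T b" "T b \<le> T a"
    unfolding T_def using a b \<open>a < b\<close> assms
    by (auto intro!: divide_right_mono power_mono divide_left_mono)
  then have "R a \<le> R b"
    unfolding R_def by (rule bessel_series_ratio_antimono)
  have "0 < R a"
    unfolding R_def T_def using a assms by (simp add: bessel_series_pos)
  then have "a * R a < b * R a" using \<open>a < b\<close> by simp
  also have "\<dots> \<le> b * R b" using \<open>R a \<le> R b\<close> b by simp
  finally have "a * R a < b * R b" .
  then have "r / 2 * (a * R a) < r / 2 * (b * R b)" using assms by (simp only: mult_less_cancel_left_pos half_gt_zero)
  moreover have "real m * a ^ 3 / r \<le> real m * b ^ 3 / r"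
    using a \<open>a < b\<close> assms by (intro divide_right_mono mult_left_mono power_mono) auto
  ultimately show "a\<^sup>2 * (deriv (besselI n) (r / a) / besselI n (r / a))
      < b\<^sup>2 * (deriv (besselI n) (r / b) / besselI n (r / b))"
    unfolding F_eq[OF a] F_eq[OF b] by linarith
qed

end
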